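(* Consider the one-time data acquisition setting with $\Theta\subseteq\mathbb{R}^m$ in which the analyst uses an exponential family model with conjugate prior, as described in the context, and Mechanism 1 run with budget $B$ and constants $L<R$ bounding $\log PMI$. Then Mechanism 1 is sensitive if and only if for every provider $i$ and any parameters $(\nu_i',\bar\tau_i')\ne(\nu_i,\bar\tau_i)$ we have $\Pr_{D_{-i}}\left[h_{D_{-i}}(\nu_i',\bar\tau_i')\ne h_{D_{-i}}(\nu_i,\bar\tau_i)\right]>0$.
   Context: There are $n$ data providers; provider $i$ holds dataset $D_i$ whose points are i.i.d. conditioned on an unknown $\theta\in\Theta\subseteq\mathbb{R}^m$; datasets are independent conditioned on $\theta$; $D_{-i}$ denotes the datasets of all providers except $i$. The likelihood is in an exponential family $p(x\mid\theta)=h(x)\exp[\theta^T\phi(x)-A(\theta)]$ and the analyst uses the conjugate family $\mathcal{P}(\theta\mid\nu,\bar\tau)=g(\nu,\bar\tau)\exp[\nu\theta^T\bar\tau-\nu A(\theta)]$, so that $p(\theta)=\mathcal{P}(\theta\mid\nu_0,\bar\tau_0)$, $p(\theta\mid D_i)=\mathcal{P}(\theta\mid\nu_i,\bar\tau_i)$ and $p(\theta\mid D_{-i})=\mathcal{P}(\theta\mid\nu_{-i},\bar\tau_{-i})$. Define $h_{D_{-i}}(\nu_i,\bar\tau_i)=\dfrac{g(\nu_i,\bar\tau_i)}{g\left(\nu_i+\nu_{-i}-\nu_0,\ \frac{\nu_i\bar\tau_i+\nu_{-i}\bar\tau_{-i}-\nu_0\bar\tau_0}{\nu_i+\nu_{-i}-\nu_0}\right)}$.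 Define $PMI(D_i,D_{-i})=\int_\Theta\frac{p(\theta\mid D_i)p(\theta\mid D_{-i})}{p(\theta)}d\theta$ and $\mathbb{D}_i(D_{-i})=\{D_i:PMI(D_i,D_{-i})>0\}$. Mechanism 1 (with budget $B$ and constants $L<R$ such that $L\le\log PMI(D_i,D_{-i})\le R$ whenever $PMI>0$): providers report $\tilde D_1,\dots,\tilde D_n$; provider $i$ is paid $\frac{B}{n}\cdot\frac{\log PMI(\tilde D_i,\tilde D_{-i})-L}{R-L}$ if $\tilde D_i\in\mathbb{D}_i(\tilde D_{-i})$ and $0$ otherwise. A payment rule $r$ is sensitive if for every provider $i$ and every realization $D_i$, whenever every other provider $j\ne i$ reports a dataset $\tilde D_j(D_j)$ with $p(\theta\mid\tilde D_j(D_j))=p(\theta\mid D_j)$, we have (1) reporting $D_i$ maximizes $\mathbb{E}_{D_{-i}\sim p(D_{-i}\mid D_i)}[r_i(\cdot,\tilde D_{-i}(D_{-i}))]$ over all reports, and (2) reporting any $D_i'$ with $p(\theta\mid D_i')\ne p(\theta\mid D_i)$ gives strictly smaller expected payment than reporting any $\tilde D_i$ with $p(\theta\mid\tilde D_i)=p(\theta\mid D_i)$. *)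

theory Defs
  imports "HOL-Probability.Probability"
begin

text \<open>Data points live in the measurable space Xsp (with base
measure Xsp for the likelihood density), the parameter theta ranges over
Theta, a subset of R^m (type real^m), integrals over Theta are w.r.t. Lebesgue measure.
Provider j (j < nprov) holds a dataset of Nsz j points.\<close>

record ('x, 'm::finite) emodel =
  Xsp   :: "'x measure"
  hb    :: "'x \<Rightarrow> real"
  phi   :: "'x \<Rightarrow> real^'m"
  Apart :: "real^'m \<Rightarrow> real"
  Theta :: "(real^'m) set"
  nu0   :: real
  tau0  :: "real^'m"
  nprov :: nat
  Nsz   :: "nat \<Rightarrow> nat"

definition lik :: "('x,'m::finite) emodel \<Rightarrow> real^'m \<Rightarrow> 'x \<Rightarrow> real" where
  "lik M \<theta> x = hb M x * exp (\<theta> \<bullet> phi M x - Apart M \<theta>)"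

definition conj_kernel :: "('x,'m::finite) emodel \<Rightarrow> real \<Rightarrow> real^'m \<Rightarrow> real^'m \<Rightarrow> real" where
  "conj_kernel M \<nu> \<tau> \<theta> = exp (\<nu> * (\<theta> \<bullet> \<tau>) - \<nu> * Apart M \<theta>)"

definition gnorm :: "('x,'m::finite) emodel \<Rightarrow> real \<Rightarrow> real^'m \<Rightarrow> real" where
  "gnorm M \<nu> \<tau> = 1 / (LINT \<theta>:Theta M|lborel. conj_kernel M \<nu> \<tau> \<theta>)"

definition conj :: "('x,'m::finite) emodel \<Rightarrow> real \<Rightarrow> real^'m \<Rightarrow> real^'m \<Rightarrow> real" where
  "conj M \<nu> \<tau> \<theta> = gnorm M \<nu> \<tau> * conj_kernel M \<nu> \<tau> \<theta>"

text \<open>Posterior parameters (nu_D, tau_D) of a dataset D (standard conjugate update),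
so that p(theta | D) = P(theta | nu_D, tau_D); the empty dataset gives the prior.\<close>
definition nu_of :: "('x,'m::finite) emodel \<Rightarrow> 'x list \<Rightarrow> real" where
  "nu_of M xs = nu0 M + real (length xs)"

definition tau_of :: "('x,'m::finite) emodel \<Rightarrow> 'x list \<Rightarrow> real^'m" where
  "tau_of M xs = (1 / nu_of M xs) *\<^sub>R (nu0 M *\<^sub>R tau0 M + sum_list (map (phi M) xs))"

definition params :: "('x,'m::finite) emodel \<Rightarrow> 'x list \<Rightarrow> real \<times> (real^'m)" where
  "params M xs = (nu_of M xs, tau_of M xs)"

definition post :: "('x,'m::finite) emodel \<Rightarrow> 'x list \<Rightarrow> real^'m \<Rightarrow> real" where
  "post M xs = conj M (nu_of M xs) (tau_of M xs)"

definition prior :: "('x,'m::finite) emodel \<Rightarrow> real^'m \<Rightarrow> real" where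
  "prior M = conj M (nu0 M) (tau0 M)"

text \<open>Pointwise mutual information PMI(D_i, D_{-i}); the datasets of the other providers
enter only through their union (the concatenation), whose posterior is p(theta | D_{-i}).\<close>
definition PMI :: "('x,'m::finite) emodel \<Rightarrow> 'x list \<Rightarrow> 'x list \<Rightarrow> real" where
  "PMI M xs ys = (LINT \<theta>:Theta M|lborel. post M xs \<theta> * post M ys \<theta> / prior M \<theta>)"

definition hfun :: "('x,'m::finite) emodel \<Rightarrow> 'x list \<Rightarrow> real \<times> (real^'m) \<Rightarrow> real" where
  "hfun M ys p =
     (let \<nu> = fst p; \<tau> = snd p; \<nu>m = nu_of M ys; \<tau>m = tau_of M ys;
          \<nu>c = \<nu> + \<nu>m - nu0 M
      in gnorm M \<nu> \<tau> /
         gnorm M \<nu>c ((1 / \<nu>c) *\<^sub>R (\<nu> *\<^sub>R \<tau> + \<nu>m *\<^sub>R \<tau>m - nu0 M *\<^sub>R tau0 M)))"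

definition datasets :: "('x,'m::finite) emodel \<Rightarrow> nat \<Rightarrow> 'x list set" where
  "datasets M j = {xs. length xs = Nsz M j \<and> set xs \<subseteq> space (Xsp M)}"

definition others :: "('x,'m::finite) emodel \<Rightarrow> nat \<Rightarrow> nat list" where
  "others M i = filter (\<lambda>j. j \<noteq> i) [0..<nprov M]"

definition minus_i :: "('x,'m::finite) emodel \<Rightarrow> nat \<Rightarrow> (nat \<Rightarrow> 'x list) \<Rightarrow> 'x list" where
  "minus_i M i rep = concat (map rep (others M i))"

definition payment :: "('x,'m::finite) emodel \<Rightarrow> real \<Rightarrow> real \<Rightarrow> real \<Rightarrow> nat \<Rightarrow> (nat \<Rightarrow> 'x list) \<Rightarrow> real" where
  "payment M B L R i rep =
     (let P = PMI M (rep i) (minus_i M i rep)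
      in if P > 0 then B / real (nprov M) * ((ln P - L) / (R - L)) else 0)"

text \<open>Random datasets of the other providers: Dm j k is the k-th point of provider j.\<close>
definition Pm :: "('x,'m::finite) emodel \<Rightarrow> nat \<Rightarrow> (nat \<Rightarrow> nat \<Rightarrow> 'x) measure" where
  "Pm M i = PiM ({..<nprov M} - {i}) (\<lambda>j. PiM {..<Nsz M j} (\<lambda>_. Xsp M))"

definition data_list :: "('x,'m::finite) emodel \<Rightarrow> (nat \<Rightarrow> nat \<Rightarrow> 'x) \<Rightarrow> nat \<Rightarrow> 'x list" where
  "data_list M Dm j = map (Dm j) [0..<Nsz M j]"

definition data_minus :: "('x,'m::finite) emodel \<Rightarrow> nat \<Rightarrow> (nat \<Rightarrow> nat \<Rightarrow> 'x) \<Rightarrow> 'x list" where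
  "data_minus M i Dm = concat (map (data_list M Dm) (others M i))"

definition lik_minus :: "('x,'m::finite) emodel \<Rightarrow> nat \<Rightarrow> real^'m \<Rightarrow> (nat \<Rightarrow> nat \<Rightarrow> 'x) \<Rightarrow> real" where
  "lik_minus M i \<theta> Dm = (\<Prod>j\<in>{..<nprov M} - {i}. \<Prod>k<Nsz M j. lik M \<theta> (Dm j k))"

text \<open>Density of p(D_{-i} | D_i) and of the marginal p(D_{-i}) w.r.t. Pm M i.\<close>
definition cond_dens :: "('x,'m::finite) emodel \<Rightarrow> nat \<Rightarrow> 'x list \<Rightarrow> (nat \<Rightarrow> nat \<Rightarrow> 'x) \<Rightarrow> real" where
  "cond_dens M i Di Dm = (LINT \<theta>:Theta M|lborel. post M Di \<theta> * lik_minus M i \<theta> Dm)"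

definition marg_dens :: "('x,'m::finite) emodel \<Rightarrow> nat \<Rightarrow> (nat \<Rightarrow> nat \<Rightarrow> 'x) \<Rightarrow> real" where
  "marg_dens M i Dm = (LINT \<theta>:Theta M|lborel. prior M \<theta> * lik_minus M i \<theta> Dm)"

definition exp_pay ::
  "('x,'m::finite) emodel \<Rightarrow> real \<Rightarrow> real \<Rightarrow> real \<Rightarrow> nat \<Rightarrow> 'x list \<Rightarrow> (nat \<Rightarrow> 'x list \<Rightarrow> 'x list) \<Rightarrow> 'x list \<Rightarrow> real" where
  "exp_pay M B L R i Di f rep_i =
     (LINT Dm|Pm M i. cond_dens M i Di Dm *
        payment M B L R i (\<lambda>j. if j = i then rep_i else f j (data_list M Dm j)))"

text \<open>Sensitivity of Mechanism 1. Posteriors are identified with their conjugate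
parameters (nu, tau).\<close>
definition sensitive :: "('x,'m::finite) emodel \<Rightarrow> real \<Rightarrow> real \<Rightarrow> real \<Rightarrow> bool" where
  "sensitive M B L R \<longleftrightarrow>
    (\<forall>i<nprov M. \<forall>Di\<in>datasets M i. \<forall>f.
      (\<forall>j<nprov M. j \<noteq> i \<longrightarrow> (\<forall>D\<in>datasets M j. f j D \<in> datasets M j \<and> params M (f j D) = params M D))
      \<longrightarrow>
      (\<forall>D'\<in>datasets M i. exp_pay M B L R i Di f D' \<le> exp_pay M B L R i Di f Di) \<and>
      (\<forall>D'\<in>datasets M i. \<forall>Dt\<in>datasets M i.
          params M D' \<noteq> params M Di \<and> params M Dt = params M Di
          \<longrightarrow> exp_pay M B L R i Di f D' < exp_pay M B L R i Di f Dt))"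

definition valid_model :: "('x,'m::finite) emodel \<Rightarrow> bool" where
  "valid_model M \<longleftrightarrow>
     sigma_finite_measure (Xsp M) \<and>
     Theta M \<in> sets lborel \<and> nu0 M > 0 \<and>
     hb M \<in> borel_measurable (Xsp M) \<and> phi M \<in> borel_measurable (Xsp M) \<and>
     Apart M \<in> borel_measurable lborel \<and>
     (\<forall>x\<in>space (Xsp M). hb M x \<ge> 0) \<and>
     (\<forall>\<theta>\<in>Theta M. integrable (Xsp M) (lik M \<theta>) \<and> (\<integral>x. lik M \<theta> x \<partial>Xsp M) = 1) \<and>
     (\<forall>xs\<in>lists (space (Xsp M)).
        set_integrable lborel (Theta M) (conj_kernel M (nu_of M xs) (tau_of M xs)) \<and>
        (LINT \<theta>:Theta M|lborel. conj_kernel M (nu_of M xs) (tau_of M xs) \<theta>) > 0)"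

definition mech_ok :: "('x,'m::finite) emodel \<Rightarrow> real \<Rightarrow> real \<Rightarrow> real \<Rightarrow> bool" where
  "mech_ok M B L R \<longleftrightarrow> B > 0 \<and> L < R \<and>
     (\<forall>i<nprov M. \<forall>rep. (\<forall>j<nprov M. rep j \<in> datasets M j) \<longrightarrow>
        PMI M (rep i) (minus_i M i rep) > 0 \<longrightarrow>
        L \<le> ln (PMI M (rep i) (minus_i M i rep)) \<and> ln (PMI M (rep i) (minus_i M i rep)) \<le> R)"

end

theory Submission
  imports Defs
begin

text \<open>By conjugacy all quantities are explicit in the normalisers \<open>g\<close>:
  \<open>PMI(D_i, D_-i) = h_D_-i(nu_i, tau_i) * g(nu_-i, tau_-i) / g(nu_0, tau_0)\<close>, and Bayes' rule gives
  \<open>p(D_-i | D_i) = PMI(D_i, D_-i) * p(D_-i)\<close>. As the payment is affine in \<open>log PMI\<close>, reporting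
  \<open>D'\<close> instead of \<open>D_i\<close> costs a positive multiple of the Kullback-Leibler divergence between
  \<open>p(. | D_i)\<close> and \<open>p(. | D')\<close>. This divergence is nonnegative, and it vanishes iff
  \<open>PMI(D_i, .)\<close> and \<open>PMI(D', .)\<close>, equivalently the two values of \<open>h\<close>, agree
  \<open>p(D_-i)\<close>-almost everywhere.\<close>

section \<open>Pointwise Kullback-Leibler divergence\<close>

definition kl_term :: "real \<Rightarrow> real \<Rightarrow> real" where
  "kl_term a b = a * (ln a - ln b) - (a - b)"

lemma kl_term_nonneg:
  assumes "0 < a" "0 < b"
  shows "0 \<le> kl_term a b"
proof -
  have "ln b - ln a \<le> (b - a) / a"
    using assms by (intro ln_diff_le)
  then show ?thesis
    using assms by (simp add: kl_term_def field_simps)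
qed

lemma kl_term_eq_0_iff:
  assumes "0 < a" "0 < b"
  shows "kl_term a b = 0 \<longleftrightarrow> a = b"
proof
  assume "kl_term a b = 0"
  show "a = b"
  proof (rule ccontr)
    assume "a \<noteq> b"
    then have "ln b - ln a < (b - a) / a"
      using assms by (intro ln_diff_less) auto
    with \<open>kl_term a b = 0\<close> show False
      using assms by (simp add: kl_term_def field_simps)
  qed
qed (simp add: kl_term_def)

section \<open>Positivity of density measures\<close>

lemma measure_density_pos_iff:
  fixes w :: "'a \<Rightarrow> real"
  assumes w: "integrable N w" and A: "A \<in> sets N"
  shows "0 < measure (density N w) A \<longleftrightarrow> \<not> (AE x in N. x \<in> A \<longrightarrow> w x \<le> 0)"
proof -
  have "emeasure (density N w) A \<le> emeasure (density N w) (space N)"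
    using A by (intro emeasure_mono) (auto dest: sets.sets_into_space)
  also have "\<dots> = (\<integral>\<^sup>+x. ennreal (w x) \<partial>N)"
    using w by (simp add: emeasure_density)
  also have "\<dots> < \<infinity>"
  proof -
    have "(\<integral>\<^sup>+x. ennreal (w x) \<partial>N) \<le> (\<integral>\<^sup>+x. ennreal \<bar>w x\<bar> \<partial>N)"
      by (intro nn_integral_mono ennreal_leI) simp
    with w show ?thesis
      by (auto simp: integrable_iff_bounded intro: le_less_trans)
  qed
  finally have "emeasure (density N w) A \<noteq> \<infinity>"
    by simp
  then have "0 < measure (density N w) A \<longleftrightarrow> A \<notin> null_sets (density N w)"
    using A by (simp add: measure_def enn2real_positive_iff zero_less_iff_neq_zero top.not_eq_extremum
        null_sets_def)
  also have "\<dots> \<longleftrightarrow> \<not> (AE x in N. x \<in> A \<longrightarrow> ennreal (w x) = 0)"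
    using w A by (subst null_sets_density_iff) auto
  finally show ?thesis
    by (simp add: ennreal_eq_0_iff)
qed

lemma integral_mult_pos_iff_measure_density_pos:
  fixes w g :: "'a \<Rightarrow> real"
  assumes wg: "integrable N (\<lambda>x. w x * g x)" and w: "integrable N w" and A: "A \<in> sets N"
    and nonneg: "\<And>x. x \<in> space N \<Longrightarrow> 0 \<le> w x" "\<And>x. x \<in> space N \<Longrightarrow> 0 \<le> g x"
    and zero: "\<And>x. x \<in> space N \<Longrightarrow> g x = 0 \<longleftrightarrow> x \<notin> A"
  shows "0 < (\<integral>x. w x * g x \<partial>N) \<longleftrightarrow> 0 < measure (density N w) A"
proof -
  have "0 \<le> (\<integral>x. w x * g x \<partial>N)"
    using nonneg by (intro integral_nonneg_AE AE_I2) auto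
  moreover have "(\<integral>x. w x * g x \<partial>N) = 0 \<longleftrightarrow> (AE x in N. w x * g x = 0)"
    using wg nonneg by (intro integral_nonneg_eq_0_iff_AE AE_I2) auto
  moreover have "(AE x in N. w x * g x = 0) \<longleftrightarrow> (AE x in N. x \<in> A \<longrightarrow> w x \<le> 0)"
    using nonneg zero by (intro AE_cong) (smt (verit) mult_eq_0_iff)
  ultimately show ?thesis
    using measure_density_pos_iff[OF w A] by linarith
qed

section \<open>Conjugate posteriors and the data of the other providers\<close>

lemma sum_list_map_concat: "sum_list (map f (concat xss)) = sum_list (map (\<lambda>xs. sum_list (map f xs)) xss)"
  by (induct xss) auto

lemma prod_list_map_concat: "prod_list (map f (concat xss)) = prod_list (map (\<lambda>xs. prod_list (map f xs)) xss)"
  by (induct xss) auto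

definition scaled_tau :: "('x,'m::finite) emodel \<Rightarrow> 'x list \<Rightarrow> real^'m" where
  "scaled_tau M xs = nu0 M *\<^sub>R tau0 M + sum_list (map (phi M) xs)"

definition post_kernel :: "('x,'m::finite) emodel \<Rightarrow> 'x list \<Rightarrow> real^'m \<Rightarrow> real" where
  "post_kernel M xs = conj_kernel M (nu_of M xs) (tau_of M xs)"

definition post_norm :: "('x,'m::finite) emodel \<Rightarrow> 'x list \<Rightarrow> real" where
  "post_norm M xs = gnorm M (nu_of M xs) (tau_of M xs)"

lemma post_eq: "post M xs \<theta> = post_norm M xs * post_kernel M xs \<theta>"
  unfolding post_def conj_def post_norm_def post_kernel_def ..

lemma PMI_params_cong:
  assumes "params M xs = params M xs'" "params M ys = params M ys'"
  shows "PMI M xs ys = PMI M xs' ys'"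
  using assms unfolding PMI_def post_def params_def by simp

lemma datasets_in_lists: "xs \<in> datasets M j \<Longrightarrow> xs \<in> lists (space (Xsp M))"
  by (auto simp: datasets_def)

lemma set_others: "set (others M i) = {..<nprov M} - {i}"
  by (auto simp: others_def)

lemma distinct_others: "distinct (others M i)"
  by (simp add: others_def)

lemma prod_list_map_data_minus:
  fixes g :: "'x \<Rightarrow> 'b::comm_monoid_mult"
  shows "prod_list (map g (data_minus M i Dm)) = (\<Prod>j\<in>{..<nprov M} - {i}. \<Prod>k<Nsz M j. g (Dm j k))"
proof -
  have "prod_list (map h (others M i)) = prod h ({..<nprov M} - {i})" for h :: "nat \<Rightarrow> 'b"
    by (metis prod.distinct_set_conv_list set_others distinct_others)
  then show ?thesis
    by (simp add: data_minus_def data_list_def prod_list_map_concat comp_def atLeast0LessThan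
        prod.distinct_set_conv_list[symmetric])
qed

lemma sum_list_map_data_minus:
  fixes g :: "'x \<Rightarrow> 'b::comm_monoid_add"
  shows "sum_list (map g (data_minus M i Dm)) = (\<Sum>j\<in>{..<nprov M} - {i}. \<Sum>k<Nsz M j. g (Dm j k))"
proof -
  have "sum_list (map h (others M i)) = sum h ({..<nprov M} - {i})" for h :: "nat \<Rightarrow> 'b"
    by (metis sum.distinct_set_conv_list set_others distinct_others)
  then show ?thesis
    by (simp add: data_minus_def data_list_def sum_list_map_concat comp_def atLeast0LessThan
        sum.distinct_set_conv_list[symmetric])
qed

lemma length_data_minus: "length (data_minus M i Dm) = (\<Sum>j\<in>{..<nprov M} - {i}. Nsz M j)"
  using sum_list_map_data_minus[of "\<lambda>_. 1::nat"] by (simp add: sum_list_triv)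

lemma lik_minus_eq_prod_list: "lik_minus M i \<theta> Dm = prod_list (map (lik M \<theta>) (data_minus M i Dm))"
  by (simp add: lik_minus_def prod_list_map_data_minus)

lemma data_list_in_datasets:
  "Dm \<in> space (Pm M i) \<Longrightarrow> j \<in> {..<nprov M} - {i} \<Longrightarrow> data_list M Dm j \<in> datasets M j"
  by (auto simp: Pm_def space_PiM datasets_def data_list_def PiE_iff)

lemma data_minus_in_lists: "Dm \<in> space (Pm M i) \<Longrightarrow> data_minus M i Dm \<in> lists (space (Xsp M))"
  using data_list_in_datasets by (fastforce simp: data_minus_def set_others datasets_def)

lemma measurable_data_point:
  "j \<in> {..<nprov M} - {i} \<Longrightarrow> k < Nsz M j \<Longrightarrow> (\<lambda>Dm. Dm j k) \<in> Pm M i \<rightarrow>\<^sub>M Xsp M"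
  unfolding Pm_def
  by (rule measurable_compose[of "\<lambda>Dm. Dm j"]) (auto intro!: measurable_component_singleton)

locale valid_emodel =
  fixes M :: "('x,'m::finite) emodel"
  assumes valid: "valid_model M"
begin

lemma nu_of_pos: "0 < nu_of M xs"
  using valid by (simp add: valid_model_def nu_of_def add_pos_nonneg)

lemma scaled_tau_eq: "nu_of M xs *\<^sub>R tau_of M xs = scaled_tau M xs"
  using nu_of_pos[of xs] by (simp add: tau_of_def scaled_tau_def)

lemma post_kernel_eq: "post_kernel M xs \<theta> = exp (\<theta> \<bullet> scaled_tau M xs - nu_of M xs * Apart M \<theta>)"
  by (simp add: post_kernel_def conj_kernel_def flip: scaled_tau_eq)

lemma params_eq_iff:
  "params M xs = params M ys \<longleftrightarrow>
     length xs = length ys \<and> sum_list (map (phi M) xs) = sum_list (map (phi M) ys)"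
proof -
  have "params M xs = params M ys \<longleftrightarrow> nu_of M xs = nu_of M ys \<and> scaled_tau M xs = scaled_tau M ys"
    using nu_of_pos[of xs] scaled_tau_eq[of xs] scaled_tau_eq[of ys]
    by (auto simp: params_def tau_of_def)
  then show ?thesis
    by (simp add: nu_of_def scaled_tau_def)
qed

lemma params_concat_cong:
  assumes "\<And>j. j \<in> set js \<Longrightarrow> params M (F j) = params M (G j)"
  shows "params M (concat (map F js)) = params M (concat (map G js))"
  using assms by (induct js) (auto simp: params_eq_iff)

lemma post_kernel_append:
  "post_kernel M xs \<theta> * post_kernel M ys \<theta> = post_kernel M [] \<theta> * post_kernel M (xs @ ys) \<theta>"
  by (simp add: post_kernel_eq scaled_tau_def nu_of_def inner_add_right algebra_simps flip: exp_add)

lemma post_kernel_mult_lik: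
  "post_kernel M xs \<theta> * prod_list (map (lik M \<theta>) ys) = prod_list (map (hb M) ys) * post_kernel M (xs @ ys) \<theta>"
proof (induct ys arbitrary: xs)
  case (Cons y ys)
  have "post_kernel M xs \<theta> * lik M \<theta> y = hb M y * post_kernel M (xs @ [y]) \<theta>"
    by (simp add: lik_def post_kernel_eq scaled_tau_def nu_of_def inner_add_right algebra_simps
        flip: exp_add)
  then have "post_kernel M xs \<theta> * prod_list (map (lik M \<theta>) (y # ys))
      = hb M y * (post_kernel M (xs @ [y]) \<theta> * prod_list (map (lik M \<theta>) ys))"
    by (simp add: ac_simps)
  then show ?case
    using Cons[of "xs @ [y]"] by simp
qed simp

lemma post_kernel_integral:
  assumes "xs \<in> lists (space (Xsp M))"
  shows "set_integrable lborel (Theta M) (post_kernel M xs)"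
    and "(LINT \<theta>:Theta M|lborel. post_kernel M xs \<theta>) = 1 / post_norm M xs"
  using valid assms by (auto simp: valid_model_def post_kernel_def post_norm_def gnorm_def)

lemma post_norm_pos: "xs \<in> lists (space (Xsp M)) \<Longrightarrow> 0 < post_norm M xs"
  using valid by (auto simp: valid_model_def post_norm_def gnorm_def)

lemma post_pos: "xs \<in> lists (space (Xsp M)) \<Longrightarrow> 0 < post M xs \<theta>"
  by (simp add: post_eq post_norm_pos post_kernel_eq)

lemma prior_eq_post_Nil: "prior M = post M []"
  using nu_of_pos[of "[]"] by (simp add: prior_def post_def nu_of_def tau_of_def)

lemma PMI_eq:
  assumes "xs \<in> lists (space (Xsp M))" "ys \<in> lists (space (Xsp M))"
  shows "PMI M xs ys = post_norm M xs * post_norm M ys / (post_norm M [] * post_norm M (xs @ ys))"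
proof -
  have "post M xs \<theta> * post M ys \<theta> / prior M \<theta>
      = post_norm M xs * post_norm M ys / post_norm M [] * post_kernel M (xs @ ys) \<theta>" for \<theta>
    using post_kernel_append[of xs \<theta> ys] post_norm_pos[of "[]"]
    by (simp add: prior_eq_post_Nil post_eq post_kernel_eq field_simps)
  then show ?thesis
    using assms by (simp add: PMI_def post_kernel_integral)
qed

lemma PMI_pos:
  "xs \<in> lists (space (Xsp M)) \<Longrightarrow> ys \<in> lists (space (Xsp M)) \<Longrightarrow> 0 < PMI M xs ys"
  by (simp add: PMI_eq post_norm_pos)

lemma hfun_params: "hfun M ys (params M xs) = post_norm M xs / post_norm M (xs @ ys)"
proof -
  have "nu_of M xs + nu_of M ys - nu0 M = nu_of M (xs @ ys)"
    by (simp add: nu_of_def)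
  moreover have "nu_of M xs *\<^sub>R tau_of M xs + nu_of M ys *\<^sub>R tau_of M ys - nu0 M *\<^sub>R tau0 M
      = nu_of M (xs @ ys) *\<^sub>R tau_of M (xs @ ys)"
    by (simp add: scaled_tau_eq scaled_tau_def)
  ultimately show ?thesis
    using nu_of_pos[of "xs @ ys"] by (simp add: hfun_def params_def post_norm_def Let_def)
qed

lemma PMI_eq_hfun:
  "xs \<in> lists (space (Xsp M)) \<Longrightarrow> ys \<in> lists (space (Xsp M)) \<Longrightarrow>
    PMI M xs ys = hfun M ys (params M xs) * (post_norm M ys / post_norm M [])"
  by (simp add: PMI_eq hfun_params)

lemma post_mult_lik_minus:
  "post M xs \<theta> * lik_minus M i \<theta> Dm
    = post_norm M xs * prod_list (map (hb M) (data_minus M i Dm)) * post_kernel M (xs @ data_minus M i Dm) \<theta>"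
  by (simp add: post_eq lik_minus_eq_prod_list post_kernel_mult_lik mult.assoc)

lemma marg_dens_eq:
  assumes "Dm \<in> space (Pm M i)"
  shows "marg_dens M i Dm
    = post_norm M [] * prod_list (map (hb M) (data_minus M i Dm)) / post_norm M (data_minus M i Dm)"
  using data_minus_in_lists[OF assms]
  by (simp add: marg_dens_def prior_eq_post_Nil post_mult_lik_minus post_kernel_integral)

lemma marg_dens_nonneg:
  assumes "Dm \<in> space (Pm M i)"
  shows "0 \<le> marg_dens M i Dm"
proof -
  have "0 \<le> prod_list (map (hb M) (data_minus M i Dm))"
    using valid data_minus_in_lists[OF assms] by (auto simp: valid_model_def intro!: prod_list_nonneg)
  then show ?thesis
    using post_norm_pos[of "[]"] post_norm_pos[OF data_minus_in_lists[OF assms]]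
    by (simp add: marg_dens_eq[OF assms])
qed

lemma prior_mult_lik_minus:
  assumes "Dm \<in> space (Pm M i)"
  shows "prior M \<theta> * lik_minus M i \<theta> Dm = marg_dens M i Dm * post M (data_minus M i Dm) \<theta>"
proof -
  have "prior M \<theta> * lik_minus M i \<theta> Dm
      = post_norm M [] * prod_list (map (hb M) (data_minus M i Dm)) * post_kernel M (data_minus M i Dm) \<theta>"
    by (simp add: prior_eq_post_Nil post_mult_lik_minus)
  also have "\<dots> = marg_dens M i Dm * post M (data_minus M i Dm) \<theta>"
    using post_norm_pos[OF data_minus_in_lists[OF assms]]
    by (simp add: marg_dens_eq[OF assms] post_eq)
  finally show ?thesis .
qed

lemma cond_dens_eq:
  assumes "xs \<in> lists (space (Xsp M))" "Dm \<in> space (Pm M i)"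
  shows "cond_dens M i xs Dm = PMI M xs (data_minus M i Dm) * marg_dens M i Dm"
proof -
  have bayes: "post M xs \<theta> * lik_minus M i \<theta> Dm
      = (post M xs \<theta> * post M (data_minus M i Dm) \<theta> / prior M \<theta>) * marg_dens M i Dm" for \<theta>
    using prior_mult_lik_minus[OF assms(2), of \<theta>] post_pos[of "[]" \<theta>]
    by (simp add: prior_eq_post_Nil field_simps)
  show ?thesis
    unfolding cond_dens_def PMI_def bayes by (rule set_integral_mult_left)
qed

lemma cond_dens_nonneg:
  assumes "xs \<in> lists (space (Xsp M))" "Dm \<in> space (Pm M i)"
  shows "0 \<le> cond_dens M i xs Dm"
  using PMI_pos[OF assms(1) data_minus_in_lists[OF assms(2)]] marg_dens_nonneg[OF assms(2)]
  by (simp add: cond_dens_eq[OF assms])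

lemma model_measurable [measurable]:
  "hb M \<in> borel_measurable (Xsp M)" "phi M \<in> borel_measurable (Xsp M)"
  "Apart M \<in> borel_measurable borel" "Theta M \<in> sets borel"
  using valid by (auto simp: valid_model_def)

lemma post_measurable [measurable]: "post M xs \<in> borel_measurable borel"
  unfolding post_def conj_def conj_kernel_def by measurable

lemma lik_minus_measurable:
  "(\<lambda>(Dm, \<theta>). lik_minus M i \<theta> Dm) \<in> borel_measurable (Pm M i \<Otimes>\<^sub>M lborel)"
proof -
  have [measurable]: "(\<lambda>p. fst p j k) \<in> Pm M i \<Otimes>\<^sub>M lborel \<rightarrow>\<^sub>M Xsp M"
    if "j \<in> {..<nprov M} - {i}" "k < Nsz M j" for j k
    using that by (intro measurable_compose[OF measurable_fst measurable_data_point])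
  show ?thesis
    unfolding lik_minus_def lik_def case_prod_beta by measurable
qed

lemma cond_dens_measurable [measurable]: "cond_dens M i xs \<in> borel_measurable (Pm M i)"
proof -
  note lik_minus_measurable [measurable]
  have "(\<lambda>(Dm, \<theta>). indicator (Theta M) \<theta> *\<^sub>R (post M xs \<theta> * lik_minus M i \<theta> Dm))
      \<in> borel_measurable (Pm M i \<Otimes>\<^sub>M lborel)"
    by measurable
  then show ?thesis
    unfolding cond_dens_def set_lebesgue_integral_def
    by (rule lborel.borel_measurable_lebesgue_integral)
qed

lemma marg_dens_eq_cond_dens_Nil: "marg_dens M i = cond_dens M i []"
  unfolding marg_dens_def cond_dens_def prior_eq_post_Nil ..

lemma marg_dens_measurable [measurable]: "marg_dens M i \<in> borel_measurable (Pm M i)"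
  by (simp add: marg_dens_eq_cond_dens_Nil)

lemma post_norm_append_measurable [measurable]:
  "(\<lambda>Dm. post_norm M (xs @ data_minus M i Dm)) \<in> borel_measurable (Pm M i)"
proof -
  define S where "S Dm = (\<Sum>j\<in>{..<nprov M} - {i}. \<Sum>k<Nsz M j. phi M (Dm j k))" for Dm
  define N where "N = (\<Sum>j\<in>{..<nprov M} - {i}. Nsz M j)"
  have [measurable]: "S \<in> borel_measurable (Pm M i)"
    unfolding S_def
    by (intro borel_measurable_sum measurable_compose[OF measurable_data_point]) auto
  have "post_kernel M (xs @ data_minus M i Dm) \<theta>
      = exp (\<theta> \<bullet> (scaled_tau M xs + S Dm) - (nu_of M xs + real N) * Apart M \<theta>)" for Dm \<theta>
    by (simp add: post_kernel_eq scaled_tau_def nu_of_def S_def N_def sum_list_map_data_minus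
        length_data_minus algebra_simps)
  then have "post_norm M (xs @ data_minus M i Dm) = 1 / (\<integral>\<theta>. indicator (Theta M) \<theta> *\<^sub>R
      exp (\<theta> \<bullet> (scaled_tau M xs + S Dm) - (nu_of M xs + real N) * Apart M \<theta>) \<partial>lborel)" for Dm
    by (simp add: post_norm_def gnorm_def set_lebesgue_integral_def flip: post_kernel_def)
  moreover have "(\<lambda>(Dm, \<theta>). indicator (Theta M) \<theta> *\<^sub>R
      exp (\<theta> \<bullet> (scaled_tau M xs + S Dm) - (nu_of M xs + real N) * Apart M \<theta>))
      \<in> borel_measurable (Pm M i \<Otimes>\<^sub>M lborel)"
    by measurable
  ultimately show ?thesis
    using lborel.borel_measurable_lebesgue_integral by (simp add: case_prod_beta)
qed

lemma hfun_data_minus_measurable [measurable]: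
  "(\<lambda>Dm. hfun M (data_minus M i Dm) (params M xs)) \<in> borel_measurable (Pm M i)"
  by (simp add: hfun_params)

lemma PMI_data_minus_measurable [measurable]:
  assumes "xs \<in> lists (space (Xsp M))"
  shows "(\<lambda>Dm. PMI M xs (data_minus M i Dm)) \<in> borel_measurable (Pm M i)"
proof -
  have "(\<lambda>Dm. hfun M (data_minus M i Dm) (params M xs) * (post_norm M ([] @ data_minus M i Dm) / post_norm M []))
      \<in> borel_measurable (Pm M i)"
    by measurable
  then show ?thesis
    by (rule measurable_cong[THEN iffD1, rotated])
       (simp add: PMI_eq_hfun[OF assms data_minus_in_lists])
qed

section \<open>The predictive density of the other providers' data\<close>

lemma product_sigma_finite_data:
  "product_sigma_finite (\<lambda>_::nat. Xsp M)"
  "product_sigma_finite (\<lambda>j. PiM {..<Nsz M j} (\<lambda>_. Xsp M))"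
proof -
  show Xsp: "product_sigma_finite (\<lambda>_::nat. Xsp M)"
    using valid by (simp add: product_sigma_finite_def valid_model_def)
  show "product_sigma_finite (\<lambda>j. PiM {..<Nsz M j} (\<lambda>_. Xsp M))"
    using product_sigma_finite.sigma_finite[OF Xsp] by (simp add: product_sigma_finite_def)
qed

lemma sigma_finite_Pm: "sigma_finite_measure (Pm M i)"
  unfolding Pm_def by (auto intro: product_sigma_finite.sigma_finite product_sigma_finite_data)

lemma lik_nonneg: "x \<in> space (Xsp M) \<Longrightarrow> 0 \<le> lik M \<theta> x"
  using valid by (simp add: lik_def valid_model_def)

lemma nn_integral_lik: "\<theta> \<in> Theta M \<Longrightarrow> (\<integral>\<^sup>+x. ennreal (lik M \<theta> x) \<partial>Xsp M) = 1"
  using valid lik_nonneg by (subst nn_integral_eq_integral) (auto simp: valid_model_def)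

lemma nn_integral_lik_minus:
  assumes "\<theta> \<in> Theta M"
  shows "(\<integral>\<^sup>+Dm. ennreal (lik_minus M i \<theta> Dm) \<partial>Pm M i) = 1"
proof -
  have [measurable]: "lik M \<theta> \<in> borel_measurable (Xsp M)"
    unfolding lik_def by measurable
  have "(\<integral>\<^sup>+Dm. ennreal (lik_minus M i \<theta> Dm) \<partial>Pm M i)
      = (\<integral>\<^sup>+Dm. (\<Prod>j\<in>{..<nprov M} - {i}. \<Prod>k<Nsz M j. ennreal (lik M \<theta> (Dm j k))) \<partial>Pm M i)"
  proof (intro nn_integral_cong)
    fix Dm assume "Dm \<in> space (Pm M i)"
    then have nonneg: "0 \<le> lik M \<theta> (Dm j k)" if "j \<in> {..<nprov M} - {i}" "k < Nsz M j" for j k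
      using that lik_nonneg by (auto simp: Pm_def space_PiM PiE_iff)
    have "ennreal (lik_minus M i \<theta> Dm) = (\<Prod>j\<in>{..<nprov M} - {i}. ennreal (\<Prod>k<Nsz M j. lik M \<theta> (Dm j k)))"
      unfolding lik_minus_def by (rule prod_ennreal[symmetric]) (auto intro!: prod_nonneg nonneg)
    also have "\<dots> = (\<Prod>j\<in>{..<nprov M} - {i}. \<Prod>k<Nsz M j. ennreal (lik M \<theta> (Dm j k)))"
      by (intro prod.cong refl prod_ennreal[symmetric]) (auto intro: nonneg)
    finally show "ennreal (lik_minus M i \<theta> Dm) = \<dots>" .
  qed
  also have "\<dots> = (\<Prod>j\<in>{..<nprov M} - {i}.
      \<integral>\<^sup>+x. (\<Prod>k<Nsz M j. ennreal (lik M \<theta> (x k))) \<partial>PiM {..<Nsz M j} (\<lambda>_. Xsp M))"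
    unfolding Pm_def
    by (rule product_sigma_finite.product_nn_integral_prod[OF product_sigma_finite_data(2)]) auto
  also have "\<dots> = 1"
  proof -
    have "(\<integral>\<^sup>+x. (\<Prod>k<n. ennreal (lik M \<theta> (x k))) \<partial>PiM {..<n} (\<lambda>_. Xsp M)) = 1" for n :: nat
      using product_sigma_finite.product_nn_integral_prod[OF product_sigma_finite_data(1),
          of "{..<n}" "\<lambda>_ x. ennreal (lik M \<theta> x)"]
      by (simp add: nn_integral_lik[OF assms])
    then show ?thesis
      by simp
  qed
  finally show ?thesis .
qed

lemma lik_minus_nonneg: "Dm \<in> space (Pm M i) \<Longrightarrow> 0 \<le> lik_minus M i \<theta> Dm"
  using data_minus_in_lists[of Dm M i] lik_nonneg
  by (auto simp: lik_minus_eq_prod_list intro!: prod_list_nonneg)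

lemma ennreal_cond_dens:
  assumes xs: "xs \<in> lists (space (Xsp M))" and Dm: "Dm \<in> space (Pm M i)"
  shows "ennreal (cond_dens M i xs Dm)
    = (\<integral>\<^sup>+\<theta>. ennreal (indicator (Theta M) \<theta> * post M xs \<theta> * lik_minus M i \<theta> Dm) \<partial>lborel)"
proof -
  have "set_integrable lborel (Theta M) (\<lambda>\<theta>. post M xs \<theta> * lik_minus M i \<theta> Dm)"
    using xs data_minus_in_lists[OF Dm] post_kernel_integral(1)[of "xs @ data_minus M i Dm"]
    by (simp add: post_mult_lik_minus)
  then show ?thesis
    using less_imp_le[OF post_pos[OF xs]] lik_minus_nonneg[OF Dm]
    by (subst nn_integral_eq_integral)
       (auto simp: cond_dens_def set_lebesgue_integral_def set_integrable_def mult.assoc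
         intro!: AE_I2 mult_nonneg_nonneg)
qed

lemma nn_integral_post_mult_lik_minus:
  assumes xs: "xs \<in> lists (space (Xsp M))"
  shows "(\<integral>\<^sup>+Dm. ennreal (indicator (Theta M) \<theta> * post M xs \<theta> * lik_minus M i \<theta> Dm) \<partial>Pm M i)
    = ennreal (indicator (Theta M) \<theta> * post M xs \<theta>)"
proof -
  have [measurable]: "(\<lambda>Dm. lik_minus M i \<theta> Dm) \<in> borel_measurable (Pm M i)"
    using lik_minus_measurable by measurable
  have "(\<integral>\<^sup>+Dm. ennreal (indicator (Theta M) \<theta> * post M xs \<theta> * lik_minus M i \<theta> Dm) \<partial>Pm M i)
      = (\<integral>\<^sup>+Dm. ennreal (indicator (Theta M) \<theta> * post M xs \<theta>) * ennreal (lik_minus M i \<theta> Dm) \<partial>Pm M i)"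
    using post_pos[OF xs, of \<theta>] lik_minus_nonneg
    by (intro nn_integral_cong) (simp add: ennreal_mult)
  also have "\<dots> = ennreal (indicator (Theta M) \<theta> * post M xs \<theta>) * (\<integral>\<^sup>+Dm. ennreal (lik_minus M i \<theta> Dm) \<partial>Pm M i)"
    by (simp add: nn_integral_cmult)
  finally show ?thesis
    by (cases "\<theta> \<in> Theta M") (simp_all add: nn_integral_lik_minus)
qed

lemma nn_integral_post:
  assumes xs: "xs \<in> lists (space (Xsp M))"
  shows "(\<integral>\<^sup>+\<theta>. ennreal (indicator (Theta M) \<theta> * post M xs \<theta>) \<partial>lborel) = 1"
proof -
  have "set_integrable lborel (Theta M) (post M xs)" "(LINT \<theta>:Theta M|lborel. post M xs \<theta>) = 1"
    using post_kernel_integral[OF xs] post_norm_pos[OF xs] by (simp_all add: post_eq[abs_def])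
  then show ?thesis
    using less_imp_le[OF post_pos[OF xs]]
    by (subst nn_integral_eq_integral) (auto simp: set_integrable_def set_lebesgue_integral_def)
qed

lemma nn_integral_cond_dens:
  assumes xs: "xs \<in> lists (space (Xsp M))"
  shows "(\<integral>\<^sup>+Dm. ennreal (cond_dens M i xs Dm) \<partial>Pm M i) = 1"
proof -
  let ?f = "\<lambda>Dm \<theta>. ennreal (indicator (Theta M) \<theta> * post M xs \<theta> * lik_minus M i \<theta> Dm)"
  have [measurable]: "(\<lambda>(Dm, \<theta>). ?f Dm \<theta>) \<in> borel_measurable (Pm M i \<Otimes>\<^sub>M lborel)"
    using lik_minus_measurable by measurable
  have "(\<integral>\<^sup>+Dm. ennreal (cond_dens M i xs Dm) \<partial>Pm M i) = (\<integral>\<^sup>+Dm. (\<integral>\<^sup>+\<theta>. ?f Dm \<theta> \<partial>lborel) \<partial>Pm M i)"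
    by (intro nn_integral_cong) (simp add: ennreal_cond_dens[OF xs])
  also have "\<dots> = (\<integral>\<^sup>+\<theta>. (\<integral>\<^sup>+Dm. ?f Dm \<theta> \<partial>Pm M i) \<partial>lborel)"
    using sigma_finite_Pm lborel.sigma_finite_measure_axioms
    by (intro pair_sigma_finite.Fubini'[symmetric]) (auto simp: pair_sigma_finite_def)
  also have "\<dots> = 1"
    by (simp add: nn_integral_post_mult_lik_minus[OF xs] nn_integral_post[OF xs])
  finally show ?thesis .
qed

lemma cond_dens_integral:
  assumes xs: "xs \<in> lists (space (Xsp M))"
  shows "integrable (Pm M i) (cond_dens M i xs)" and "(\<integral>Dm. cond_dens M i xs Dm \<partial>Pm M i) = 1"
proof -
  have nonneg: "AE Dm in Pm M i. 0 \<le> cond_dens M i xs Dm"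
    using cond_dens_nonneg[OF xs] by (rule AE_I2)
  have nn: "(\<integral>\<^sup>+Dm. ennreal (cond_dens M i xs Dm) \<partial>Pm M i) = ennreal 1"
    using nn_integral_cond_dens[OF xs] by simp
  show "integrable (Pm M i) (cond_dens M i xs)"
    by (rule integrableI_nn_integral_finite[OF cond_dens_measurable nonneg nn])
  show "(\<integral>Dm. cond_dens M i xs Dm \<partial>Pm M i) = 1"
    using integral_eq_nn_integral[OF cond_dens_measurable nonneg] nn by simp
qed

end

section \<open>Expected payments\<close>

definition params_preserving :: "('x,'m::finite) emodel \<Rightarrow> nat \<Rightarrow> (nat \<Rightarrow> 'x list \<Rightarrow> 'x list) \<Rightarrow> bool" where
  "params_preserving M i f \<longleftrightarrow> (\<forall>j<nprov M. j \<noteq> i \<longrightarrow>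
     (\<forall>D\<in>datasets M j. f j D \<in> datasets M j \<and> params M (f j D) = params M D))"

text \<open>The Kullback-Leibler divergence between \<open>p(D_-i | D_i)\<close> and \<open>p(D_-i | D')\<close>, written against
  the marginal \<open>p(D_-i)\<close> (see \<open>cond_dens_eq\<close>). The extra term \<open>-(a - b)\<close> of
  \<^const>\<open>kl_term\<close> integrates to \<open>1 - 1 = 0\<close> but makes the integrand pointwise nonnegative.\<close>
definition predictive_kl :: "('x,'m::finite) emodel \<Rightarrow> nat \<Rightarrow> 'x list \<Rightarrow> 'x list \<Rightarrow> real" where
  "predictive_kl M i Di D' = (\<integral>Dm. marg_dens M i Dm *
     kl_term (PMI M Di (data_minus M i Dm)) (PMI M D' (data_minus M i Dm)) \<partial>Pm M i)"

context valid_emodel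
begin

lemma minus_i_reports:
  assumes f: "params_preserving M i f" and Dm: "Dm \<in> space (Pm M i)"
  shows "params M (minus_i M i (\<lambda>j. if j = i then rep else f j (data_list M Dm j)))
    = params M (data_minus M i Dm)"
proof -
  have "minus_i M i (\<lambda>j. if j = i then rep else f j (data_list M Dm j))
      = concat (map (\<lambda>j. f j (data_list M Dm j)) (others M i))"
    unfolding minus_i_def by (intro arg_cong[where f = concat] map_cong) (auto simp: others_def)
  also have "params M \<dots> = params M (concat (map (data_list M Dm) (others M i)))"
  proof (rule params_concat_cong)
    fix j assume "j \<in> set (others M i)"
    then show "params M (f j (data_list M Dm j)) = params M (data_list M Dm j)"
      using f data_list_in_datasets[OF Dm] by (auto simp: params_preserving_def set_others)
  qed
  finally show ?thesis
    by (simp add: data_minus_def)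
qed

lemma ln_PMI_bounds:
  assumes mech: "mech_ok M B L R" and i: "i < nprov M" and rep: "rep \<in> datasets M i"
    and Dm: "Dm \<in> space (Pm M i)"
  shows "L \<le> ln (PMI M rep (data_minus M i Dm))" and "ln (PMI M rep (data_minus M i Dm)) \<le> R"
proof -
  define reps where "reps j = (if j = i then rep else data_list M Dm j)" for j
  have minus: "minus_i M i reps = data_minus M i Dm"
    unfolding minus_i_def data_minus_def
    by (intro arg_cong[where f = concat] map_cong) (auto simp: others_def reps_def)
  have "\<forall>j<nprov M. reps j \<in> datasets M j"
    using rep data_list_in_datasets[OF Dm] by (simp add: reps_def)
  moreover have "0 < PMI M (reps i) (minus_i M i reps)"
    using PMI_pos datasets_in_lists[OF rep] data_minus_in_lists[OF Dm] by (simp add: minus reps_def)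
  ultimately have "L \<le> ln (PMI M (reps i) (minus_i M i reps)) \<and> ln (PMI M (reps i) (minus_i M i reps)) \<le> R"
    using mech i unfolding mech_ok_def by blast
  then show "L \<le> ln (PMI M rep (data_minus M i Dm))" "ln (PMI M rep (data_minus M i Dm)) \<le> R"
    by (simp_all add: minus reps_def)
qed

lemma exp_pay_eq:
  assumes f: "params_preserving M i f" and rep: "rep \<in> datasets M i"
  shows "exp_pay M B L R i Di f rep
    = B / real (nprov M) / (R - L) * (\<integral>Dm. cond_dens M i Di Dm * (ln (PMI M rep (data_minus M i Dm)) - L) \<partial>Pm M i)"
proof -
  have "payment M B L R i (\<lambda>j. if j = i then rep else f j (data_list M Dm j))
      = B / real (nprov M) / (R - L) * (ln (PMI M rep (data_minus M i Dm)) - L)"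
    if Dm: "Dm \<in> space (Pm M i)" for Dm
    using PMI_params_cong[OF refl minus_i_reports[OF f Dm]]
      PMI_pos[OF datasets_in_lists[OF rep] data_minus_in_lists[OF Dm]]
    by (simp add: payment_def)
  then show ?thesis
    unfolding exp_pay_def by (simp add: ac_simps cong: Bochner_Integration.integral_cong)
qed

lemma integrable_cond_dens_mult_ln_PMI:
  assumes mech: "mech_ok M B L R" and i: "i < nprov M"
    and Di: "Di \<in> datasets M i" and rep: "rep \<in> datasets M i"
  shows "integrable (Pm M i) (\<lambda>Dm. cond_dens M i Di Dm * (ln (PMI M rep (data_minus M i Dm)) - L))"
proof (rule Bochner_Integration.integrable_bound)
  show "integrable (Pm M i) (\<lambda>Dm. cond_dens M i Di Dm * (R - L))"
    using cond_dens_integral(1)[OF datasets_in_lists[OF Di]] by simp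
  show "(\<lambda>Dm. cond_dens M i Di Dm * (ln (PMI M rep (data_minus M i Dm)) - L)) \<in> borel_measurable (Pm M i)"
    using PMI_data_minus_measurable[OF datasets_in_lists[OF rep]] by measurable
  show "AE Dm in Pm M i. norm (cond_dens M i Di Dm * (ln (PMI M rep (data_minus M i Dm)) - L))
      \<le> norm (cond_dens M i Di Dm * (R - L))"
  proof (rule AE_I2)
    fix Dm assume Dm: "Dm \<in> space (Pm M i)"
    show "norm (cond_dens M i Di Dm * (ln (PMI M rep (data_minus M i Dm)) - L))
        \<le> norm (cond_dens M i Di Dm * (R - L))"
      using ln_PMI_bounds[OF mech i rep Dm] cond_dens_nonneg[OF datasets_in_lists[OF Di] Dm]
      by (simp add: abs_mult mult_left_mono)
  qed
qed

lemma predictive_kl_eq: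
  assumes mech: "mech_ok M B L R" and i: "i < nprov M"
    and Di: "Di \<in> datasets M i" and D': "D' \<in> datasets M i"
  shows "integrable (Pm M i) (\<lambda>Dm. marg_dens M i Dm *
      kl_term (PMI M Di (data_minus M i Dm)) (PMI M D' (data_minus M i Dm)))"
    and "predictive_kl M i Di D'
      = (\<integral>Dm. cond_dens M i Di Dm * (ln (PMI M Di (data_minus M i Dm)) - L) \<partial>Pm M i)
        - (\<integral>Dm. cond_dens M i Di Dm * (ln (PMI M D' (data_minus M i Dm)) - L) \<partial>Pm M i)"
proof -
  let ?l = "\<lambda>xs Dm. cond_dens M i Di Dm * (ln (PMI M xs (data_minus M i Dm)) - L)"
  have Di': "Di \<in> lists (space (Xsp M))" and D'': "D' \<in> lists (space (Xsp M))"
    using Di D' by (simp_all add: datasets_in_lists)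
  have pointwise: "marg_dens M i Dm * kl_term (PMI M Di (data_minus M i Dm)) (PMI M D' (data_minus M i Dm))
      = ?l Di Dm - ?l D' Dm - cond_dens M i Di Dm + cond_dens M i D' Dm" if "Dm \<in> space (Pm M i)" for Dm
    by (simp add: cond_dens_eq[OF Di' that] cond_dens_eq[OF D'' that] kl_term_def algebra_simps)
  have integrable: "integrable (Pm M i) (\<lambda>Dm. ?l Di Dm - ?l D' Dm - cond_dens M i Di Dm + cond_dens M i D' Dm)"
    using integrable_cond_dens_mult_ln_PMI[OF mech i Di] cond_dens_integral(1)[OF Di']
      cond_dens_integral(1)[OF D''] Di D' by auto
  then show "integrable (Pm M i) (\<lambda>Dm. marg_dens M i Dm *
      kl_term (PMI M Di (data_minus M i Dm)) (PMI M D' (data_minus M i Dm)))"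
    by (simp add: pointwise cong: Bochner_Integration.integrable_cong)
  have "predictive_kl M i Di D' = (\<integral>Dm. ?l Di Dm - ?l D' Dm - cond_dens M i Di Dm + cond_dens M i D' Dm \<partial>Pm M i)"
    unfolding predictive_kl_def by (simp add: pointwise cong: Bochner_Integration.integral_cong)
  also have "\<dots> = (\<integral>Dm. ?l Di Dm \<partial>Pm M i) - (\<integral>Dm. ?l D' Dm \<partial>Pm M i)"
    using integrable_cond_dens_mult_ln_PMI[OF mech i Di] cond_dens_integral[OF Di']
      cond_dens_integral[OF D''] Di D' by simp
  finally show "predictive_kl M i Di D' = (\<integral>Dm. ?l Di Dm \<partial>Pm M i) - (\<integral>Dm. ?l D' Dm \<partial>Pm M i)" .
qed

lemma exp_pay_diff:
  assumes mech: "mech_ok M B L R" and i: "i < nprov M" and f: "params_preserving M i f"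
    and Di: "Di \<in> datasets M i" and D': "D' \<in> datasets M i"
  shows "exp_pay M B L R i Di f Di - exp_pay M B L R i Di f D'
    = B / real (nprov M) / (R - L) * predictive_kl M i Di D'"
  by (simp add: exp_pay_eq[OF f Di] exp_pay_eq[OF f D'] predictive_kl_eq(2)[OF mech i Di D']
      right_diff_distrib)

lemma predictive_kl_nonneg:
  assumes "Di \<in> lists (space (Xsp M))" "D' \<in> lists (space (Xsp M))"
  shows "0 \<le> predictive_kl M i Di D'"
  unfolding predictive_kl_def
  using assms PMI_pos[OF _ data_minus_in_lists] marg_dens_nonneg
  by (intro integral_nonneg_AE AE_I2 mult_nonneg_nonneg kl_term_nonneg) auto

lemma predictive_kl_pos_iff:
  assumes mech: "mech_ok M B L R" and i: "i < nprov M"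
    and Di: "Di \<in> datasets M i" and D': "D' \<in> datasets M i"
  shows "0 < predictive_kl M i Di D' \<longleftrightarrow>
    0 < measure (density (Pm M i) (\<lambda>Dm. ennreal (marg_dens M i Dm)))
      {Dm \<in> space (Pm M i). hfun M (data_minus M i Dm) (params M D') \<noteq> hfun M (data_minus M i Dm) (params M Di)}"
  unfolding predictive_kl_def
proof (rule integral_mult_pos_iff_measure_density_pos)
  have Di': "Di \<in> lists (space (Xsp M))" and D'': "D' \<in> lists (space (Xsp M))"
    using Di D' by (simp_all add: datasets_in_lists)
  show "integrable (Pm M i) (\<lambda>Dm. marg_dens M i Dm *
      kl_term (PMI M Di (data_minus M i Dm)) (PMI M D' (data_minus M i Dm)))"
    by (rule predictive_kl_eq(1)[OF mech i Di D'])
  show "integrable (Pm M i) (marg_dens M i)"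
    using cond_dens_integral(1)[of "[]"] by (simp add: marg_dens_eq_cond_dens_Nil)
  show "{Dm \<in> space (Pm M i). hfun M (data_minus M i Dm) (params M D') \<noteq> hfun M (data_minus M i Dm) (params M Di)}
      \<in> sets (Pm M i)"
    by (intro borel_measurable_neq hfun_data_minus_measurable)
  fix Dm assume Dm: "Dm \<in> space (Pm M i)"
  note pos = PMI_pos[OF Di' data_minus_in_lists[OF Dm]] PMI_pos[OF D'' data_minus_in_lists[OF Dm]]
  show "0 \<le> marg_dens M i Dm"
    using marg_dens_nonneg[OF Dm] .
  show "0 \<le> kl_term (PMI M Di (data_minus M i Dm)) (PMI M D' (data_minus M i Dm))"
    using kl_term_nonneg[OF pos] .
  show "kl_term (PMI M Di (data_minus M i Dm)) (PMI M D' (data_minus M i Dm)) = 0 \<longleftrightarrow>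
      Dm \<notin> {Dm \<in> space (Pm M i). hfun M (data_minus M i Dm) (params M D') \<noteq> hfun M (data_minus M i Dm) (params M Di)}"
  proof -
    have "PMI M Di (data_minus M i Dm) = PMI M D' (data_minus M i Dm) \<longleftrightarrow>
        hfun M (data_minus M i Dm) (params M Di) = hfun M (data_minus M i Dm) (params M D')"
      using post_norm_pos[OF data_minus_in_lists[OF Dm]] post_norm_pos[of "[]"]
      by (simp add: PMI_eq_hfun[OF Di' data_minus_in_lists[OF Dm]] PMI_eq_hfun[OF D'' data_minus_in_lists[OF Dm]])
    then show ?thesis
      using Dm by (auto simp: kl_term_eq_0_iff[OF pos])
  qed
qed

lemma sensitive_iff_predictive_kl_pos:
  assumes mech: "mech_ok M B L R"
  shows "sensitive M B L R \<longleftrightarrow> (\<forall>i<nprov M. \<forall>Di\<in>datasets M i. \<forall>D'\<in>datasets M i.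
    params M D' \<noteq> params M Di \<longrightarrow> 0 < predictive_kl M i Di D')"
    (is "_ \<longleftrightarrow> ?kl_pos")
proof -
  have scale: "0 < B / real (nprov M) / (R - L)" if "i < nprov M" for i
    using mech that by (simp add: mech_ok_def)
  have sign: "(b < a \<longleftrightarrow> 0 < d) \<and> b \<le> a" if "a - b = k * d" "0 < k" "0 \<le> d" for a b k d :: real
  proof -
    have "0 < k * d \<longleftrightarrow> 0 < d" "0 \<le> k * d"
      using that(2,3) by (simp_all add: zero_less_mult_iff)
    then show ?thesis
      using that(1) by linarith
  qed
  have gap: "(exp_pay M B L R i Di f D' < exp_pay M B L R i Di f Di \<longleftrightarrow> 0 < predictive_kl M i Di D')
      \<and> exp_pay M B L R i Di f D' \<le> exp_pay M B L R i Di f Di"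
    if "i < nprov M" "params_preserving M i f" "Di \<in> datasets M i" "D' \<in> datasets M i" for i f Di D'
    using exp_pay_diff[OF mech that] scale[OF that(1)]
      predictive_kl_nonneg[OF datasets_in_lists datasets_in_lists, OF that(3,4), of i]
    by (rule sign)
  have same: "exp_pay M B L R i Di f Dt = exp_pay M B L R i Di f Di"
    if "params_preserving M i f" "Dt \<in> datasets M i" "Di \<in> datasets M i" "params M Dt = params M Di"
    for i f Di Dt
    using that by (simp add: exp_pay_eq PMI_params_cong[OF that(4) refl])
  show ?thesis
  proof
    assume sensitive: "sensitive M B L R"
    have identity: "params_preserving M i (\<lambda>j D. D)" for i
      by (simp add: params_preserving_def)
    show ?kl_pos
    proof (intro allI impI ballI)
      fix i Di D'
      assume i: "i < nprov M" and Di: "Di \<in> datasets M i" and D': "D' \<in> datasets M i"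
        and "params M D' \<noteq> params M Di"
      then have "exp_pay M B L R i Di (\<lambda>j D. D) D' < exp_pay M B L R i Di (\<lambda>j D. D) Di"
        using sensitive identity unfolding sensitive_def params_preserving_def[symmetric] by blast
      then show "0 < predictive_kl M i Di D'"
        using gap[OF i identity Di D'] by blast
    qed
  next
    assume kl_pos: ?kl_pos
    show "sensitive M B L R"
      unfolding sensitive_def params_preserving_def[symmetric]
    proof (intro allI impI ballI conjI)
      fix i Di f D'
      assume "i < nprov M" "Di \<in> datasets M i" "params_preserving M i f" "D' \<in> datasets M i"
      then show "exp_pay M B L R i Di f D' \<le> exp_pay M B L R i Di f Di"
        using gap by blast
    next
      fix i Di f D' Dt
      assume "i < nprov M" "Di \<in> datasets M i" "params_preserving M i f" "D' \<in> datasets M i"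
        "Dt \<in> datasets M i" "params M D' \<noteq> params M Di \<and> params M Dt = params M Di"
      then show "exp_pay M B L R i Di f D' < exp_pay M B L R i Di f Dt"
        using gap[of i f Di D'] same[of i f Dt Di] kl_pos by auto
    qed
  qed
qed

end

theorem theorem3:
  fixes M :: "('x, 'm::finite) emodel" and B L R :: real
  assumes "valid_model M"
    and "mech_ok M B L R"
  shows "sensitive M B L R \<longleftrightarrow>
    (\<forall>i<nprov M. \<forall>Di\<in>datasets M i. \<forall>D'\<in>datasets M i.
       params M D' \<noteq> params M Di \<longrightarrow>
       measure (density (Pm M i) (\<lambda>Dm. ennreal (marg_dens M i Dm)))
         {Dm\<in>space (Pm M i). hfun M (data_minus M i Dm) (params M D')
                             \<noteq> hfun M (data_minus M i Dm) (params M Di)} > 0)"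
proof -
  interpret valid_emodel M
    using assms(1) by (rule valid_emodel.intro)
  show ?thesis
    by (simp add: sensitive_iff_predictive_kl_pos[OF assms(2)] predictive_kl_pos_iff[OF assms(2)])
qed

end
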